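(* Let $\Sigma=(X,U,F)$ be a system, $Q\subset X$ a controlled invariant set, and $V\subset U$ a finite cover of $Q$ such that: (C.1) $Q_a\cap Q_b=\emptyset$ for all distinct $a,b\in V$; (C.2) for all $a,b\in V$ with $M_{ab}=1$ there exists $K\subset Q_a$ such that $Q_b\subset F(K,a)$; (C.3) $Q_c=\emptyset$ for every $c\in U\setminus V$. Let $\mathcal{A}_V=\{Q_a:a\in V\}$ and $G_V:\mathcal{A}_V\to U$, $G_V(Q_a)=a$. Then \[h^{fb}_{inv}(Q)=\inf\{h_{inv}(\mathcal{B},G_{\mathcal{B}}):(\mathcal{B},G_{\mathcal{B}})\text{ is a refinement of }(\mathcal{A}_V,G_V)\}.\]
   Context: A system is a triple $\Sigma=(X,U,F)$ where $X,U$ are nonempty sets and $F:X\times U\rightrightarrows X$ is a set-valued map with $F(x,u)\neq\emptyset$ for all $(x,u)$; for $A\subset X$, $F(A,u)=\bigcup_{x\in A}F(x,u)$. $Q\subset X$ is controlled invariant if for every $x\in Q$ there is $u\in U$ with $F(x,u)\subset Q$. For $u\in U$ put $Q_u=\{x\in Q:F(x,u)\subset Q\}$. A set $V\subset U$ is a cover of $Q$ if $Q\subset\bigcup_{a\in V}Q_a$; the admissible matrix $M_{Q,V}=(M_{ab})_{a,b\in V}$ has $M_{ab}=1$ if there exists $x\in Q_a$ with $F(x,a)\cap Q_b\neq\emptyset$, and $0$ otherwise. An invariant cover of $Q$ is a pair $(\mathcal{A},G)$ where $\mathcal{A}$ is a finite cover of $Q$ (by subsets of $Q$) and $G:\mathcal{A}\to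 U$ satisfies $F(A,G(A))\subset Q$ for all $A\in\mathcal{A}$. For $\mathcal{S}\subset\mathcal{A}^n$, $\alpha=\alpha(0)\cdots\alpha(n-1)\in\mathcal{S}$ and integer $0\le t<n-1$, let $P(\alpha|_{[0,t]})=\{A\in\mathcal{A}:\exists\hat\alpha\in\mathcal{S},\ \hat\alpha|_{[0,t]}=\alpha|_{[0,t]},\ A=\hat\alpha(t+1)\}$, and $P(\alpha|_{[0,n-1]})=P(\alpha)=\{\hat\alpha(0):\hat\alpha\in\mathcal{S}\}$. $\mathcal{S}$ is $(n,Q)$-spanning in $(\mathcal{A},G)$ if (1) the elements of $P(\alpha)$ cover $Q$, and (2) for every $\alpha\in\mathcal{S}$ and $0\le t<n-1$, $F(\alpha(t),G(\alpha(t)))\subset\bigcup_{A'\in P(\alpha|_{[0,t]})}A'$. Let $N(\mathcal{S})=\max_{\alpha\in\mathcal{S}}\prod_{t=0}^{n-1}\sharp P(\alpha|_{[0,t]})$, $r_{inv}(n,Q,\mathcal{A},G)=\min\{N(\mathcal{S}):\mathcal{S}\ (n,Q)\text{-spanning in }(\mathcal{A},G)\}$, $h_{inv}(\mathcal{A},G)=\lim_{n\to\infty}\frac1n\log r_{inv}(n,Q,\mathcal{A},G)$ ($\log$ base $2$), and the invariance feedback entropy $h^{fb}_{inv}(Q)=\inf_{(\mathcal{A},G)}h_{inv}(\mathcal{A},G)$ over all invariant covers of $Q$. A refinement of $(\mathcal{A}_V,G_V)$ is a pair $(\mathcal{B},G_{\mathcal{B}})$ where $\mathcal{B}$ is a finite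 cover of $Q$, every $B\in\mathcal{B}$ is contained in some $A\in\mathcal{A}_V$, and $G_{\mathcal{B}}(B)=G_V(A)$ for such $A$. *)

theory Defs
  imports Complex_Main
begin

text \<open>A system (X,U,F) with X = UNIV :: 'x set, U = UNIV :: 'u set,
  F :: 'x => 'u => 'x set (set-valued map).\<close>

definition is_system :: "('x \<Rightarrow> 'u \<Rightarrow> 'x set) \<Rightarrow> bool" where
  "is_system F \<longleftrightarrow> (\<forall>x u. F x u \<noteq> {})"

definition Fset :: "('x \<Rightarrow> 'u \<Rightarrow> 'x set) \<Rightarrow> 'x set \<Rightarrow> 'u \<Rightarrow> 'x set" where
  "Fset F A u = (\<Union>x\<in>A. F x u)"

definition controlled_invariant :: "('x \<Rightarrow> 'u \<Rightarrow> 'x set) \<Rightarrow> 'x set \<Rightarrow> bool" where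
  "controlled_invariant F Q \<longleftrightarrow> (\<forall>x\<in>Q. \<exists>u. F x u \<subseteq> Q)"

definition Qu :: "('x \<Rightarrow> 'u \<Rightarrow> 'x set) \<Rightarrow> 'x set \<Rightarrow> 'u \<Rightarrow> 'x set" where
  "Qu F Q u = {x \<in> Q. F x u \<subseteq> Q}"

definition is_cover :: "('x \<Rightarrow> 'u \<Rightarrow> 'x set) \<Rightarrow> 'x set \<Rightarrow> 'u set \<Rightarrow> bool" where
  "is_cover F Q V \<longleftrightarrow> Q \<subseteq> (\<Union>a\<in>V. Qu F Q a)"

text \<open>Admissible matrix entry M_ab = 1 (as a boolean).\<close>
definition adm_matrix :: "('x \<Rightarrow> 'u \<Rightarrow> 'x set) \<Rightarrow> 'x set \<Rightarrow> 'u \<Rightarrow> 'u \<Rightarrow> bool" where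
  "adm_matrix F Q a b \<longleftrightarrow> (\<exists>x\<in>Qu F Q a. F x a \<inter> Qu F Q b \<noteq> {})"

definition invariant_cover ::
  "('x \<Rightarrow> 'u \<Rightarrow> 'x set) \<Rightarrow> 'x set \<Rightarrow> 'x set set \<Rightarrow> ('x set \<Rightarrow> 'u) \<Rightarrow> bool" where
  "invariant_cover F Q \<A> G \<longleftrightarrow> finite \<A> \<and> (\<forall>A\<in>\<A>. A \<subseteq> Q) \<and> Q \<subseteq> \<Union>\<A>
     \<and> (\<forall>A\<in>\<A>. Fset F A (G A) \<subseteq> Q)"

text \<open>Sequences alpha in A^n are lists of length n (alpha(t) = alpha ! t).
  Pset S n alpha t is P(alpha|_[0,t]); for t = n-1 it is P(alpha).\<close>
definition Pset :: "'x set list set \<Rightarrow> nat \<Rightarrow> 'x set list \<Rightarrow> nat \<Rightarrow> 'x set set" where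
  "Pset S n \<alpha> t =
     (if t < n - 1
      then {A. \<exists>\<beta>\<in>S. take (t+1) \<beta> = take (t+1) \<alpha> \<and> A = \<beta> ! (t+1)}
      else {\<beta> ! 0 | \<beta>. \<beta> \<in> S})"

definition spanning ::
  "('x \<Rightarrow> 'u \<Rightarrow> 'x set) \<Rightarrow> 'x set \<Rightarrow> 'x set set \<Rightarrow> ('x set \<Rightarrow> 'u) \<Rightarrow> nat
    \<Rightarrow> 'x set list set \<Rightarrow> bool" where
  "spanning F Q \<A> G n S \<longleftrightarrow>
     (\<forall>\<alpha>\<in>S. length \<alpha> = n \<and> set \<alpha> \<subseteq> \<A>)
     \<and> Q \<subseteq> \<Union>(Pset S n [] (n - 1))
     \<and> (\<forall>\<alpha>\<in>S. \<forall>t. t < n - 1 \<longrightarrow>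
           Fset F (\<alpha> ! t) (G (\<alpha> ! t)) \<subseteq> \<Union>(Pset S n \<alpha> t))"

definition Nspan :: "nat \<Rightarrow> 'x set list set \<Rightarrow> nat" where
  "Nspan n S = Max (insert 0 ((\<lambda>\<alpha>. \<Prod>t<n. card (Pset S n \<alpha> t)) ` S))"

definition r_inv ::
  "('x \<Rightarrow> 'u \<Rightarrow> 'x set) \<Rightarrow> 'x set \<Rightarrow> nat \<Rightarrow> 'x set set \<Rightarrow> ('x set \<Rightarrow> 'u) \<Rightarrow> nat" where
  "r_inv F Q n \<A> G = Inf {Nspan n S | S. spanning F Q \<A> G n S}"

definition h_inv ::
  "('x \<Rightarrow> 'u \<Rightarrow> 'x set) \<Rightarrow> 'x set \<Rightarrow> 'x set set \<Rightarrow> ('x set \<Rightarrow> 'u) \<Rightarrow> real" where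
  "h_inv F Q \<A> G = lim (\<lambda>n. log 2 (real (r_inv F Q n \<A> G)) / real n)"

definition hfb_inv :: "('x \<Rightarrow> 'u \<Rightarrow> 'x set) \<Rightarrow> 'x set \<Rightarrow> real" where
  "hfb_inv F Q = Inf {h_inv F Q \<A> G | \<A> G. invariant_cover F Q \<A> G}"

definition AV :: "('x \<Rightarrow> 'u \<Rightarrow> 'x set) \<Rightarrow> 'x set \<Rightarrow> 'u set \<Rightarrow> 'x set set" where
  "AV F Q V = Qu F Q ` V"

text \<open>G_V(Q_a) = a (well defined by (C.1) up to empty cells).\<close>
definition GV :: "('x \<Rightarrow> 'u \<Rightarrow> 'x set) \<Rightarrow> 'x set \<Rightarrow> 'u set \<Rightarrow> 'x set \<Rightarrow> 'u" where
  "GV F Q V A = (SOME a. a \<in> V \<and> A = Qu F Q a)"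

definition refinement ::
  "'x set \<Rightarrow> 'x set set \<Rightarrow> ('x set \<Rightarrow> 'u) \<Rightarrow> 'x set set \<Rightarrow> ('x set \<Rightarrow> 'u) \<Rightarrow> bool" where
  "refinement Q \<A> G \<B> GB \<longleftrightarrow> finite \<B> \<and> (\<forall>B\<in>\<B>. B \<subseteq> Q) \<and> Q \<subseteq> \<Union>\<B>
     \<and> (\<forall>B\<in>\<B>. \<exists>A\<in>\<A>. B \<subseteq> A \<and> GB B = G A)"

end

theory Submission
  imports Defs
begin

text \<open>A cell A of an invariant cover satisfies F(A,G(A)) \<subseteq> Q, i.e. A \<subseteq> Q_G(A). By (C.3) a
  nonempty such cell forces G(A) \<in> V, and by (C.1) G_V labels the cell Q_G(A) of A_V with
  G(A) itself. So every invariant cover is a refinement of (A_V, G_V), up to the value of G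
  on the empty cell, which does not affect the entropy; conversely every refinement is an
  invariant cover. Both infima therefore range over the same set of entropies. (When V is
  empty there is no label for the empty cell, but then Q is empty and all entropies vanish.)\<close>

lemma Fset_empty [simp]: "Fset F {} u = {}"
  unfolding Fset_def by simp

lemma Fset_Qu_subset: "Fset F (Qu F Q u) u \<subseteq> Q"
  unfolding Fset_def Qu_def by blast

lemma invariant_cover_subset_Qu:
  assumes "invariant_cover F Q \<A> G" and "A \<in> \<A>"
  shows "A \<subseteq> Qu F Q (G A)"
  using assms unfolding invariant_cover_def Qu_def Fset_def by blast

lemma h_inv_cong:
  assumes "\<And>A. Fset F A (G A) = Fset F A (G' A)"
  shows "h_inv F Q \<A> G = h_inv F Q \<A> G'"
proof -
  have "spanning F Q \<A> G n S = spanning F Q \<A> G' n S" for n S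
    unfolding spanning_def using assms by simp
  then show ?thesis unfolding h_inv_def r_inv_def by simp
qed

lemma h_inv_fun_upd_empty: "h_inv F Q \<A> (G({} := u)) = h_inv F Q \<A> G"
  by (rule h_inv_cong) simp

lemma r_inv_empty: "r_inv F {} n \<A> G = 0"
proof -
  have "spanning F {} \<A> G n {}" unfolding spanning_def by simp
  moreover have "Nspan n {} = 0" unfolding Nspan_def by simp
  ultimately have "(0::nat) \<in> {Nspan n S | S. spanning F {} \<A> G n S}" by force
  then show ?thesis unfolding r_inv_def by (rule cInf_eq_minimum) auto
qed

text \<open>Relies on the junk value log 2 0 = 0.\<close>
lemma h_inv_empty: "h_inv F {} \<A> G = 0"
  unfolding h_inv_def r_inv_empty by (simp add: log_def limI)

lemma GV_Qu:
  assumes "a \<in> V"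
  shows "GV F Q V (Qu F Q a) \<in> V" and "Qu F Q (GV F Q V (Qu F Q a)) = Qu F Q a"
proof -
  have "\<exists>b. b \<in> V \<and> Qu F Q a = Qu F Q b" using assms by blast
  then have "GV F Q V (Qu F Q a) \<in> V \<and> Qu F Q a = Qu F Q (GV F Q V (Qu F Q a))"
    unfolding GV_def by (rule someI_ex)
  then show "GV F Q V (Qu F Q a) \<in> V" and "Qu F Q (GV F Q V (Qu F Q a)) = Qu F Q a"
    by simp_all
qed

lemma GV_Qu_eq:
  assumes disjoint: "\<forall>a\<in>V. \<forall>b\<in>V. a \<noteq> b \<longrightarrow> Qu F Q a \<inter> Qu F Q b = {}"
    and "a \<in> V" and "Qu F Q a \<noteq> {}"
  shows "GV F Q V (Qu F Q a) = a"
  using GV_Qu[OF \<open>a \<in> V\<close>] disjoint assms(2,3) by fastforce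

lemma AV_GV_invariant: "A \<in> AV F Q V \<Longrightarrow> Fset F A (GV F Q V A) \<subseteq> Q"
  unfolding AV_def using GV_Qu(2) Fset_Qu_subset by (metis imageE)

lemma invariant_cover_if_refinement:
  assumes refines: "refinement Q \<A> G \<B> GB" and invariant: "\<And>A. A \<in> \<A> \<Longrightarrow> Fset F A (G A) \<subseteq> Q"
  shows "invariant_cover F Q \<B> GB"
  unfolding invariant_cover_def
proof (intro conjI ballI)
  fix B assume "B \<in> \<B>"
  then obtain A where "A \<in> \<A>" "B \<subseteq> A" "GB B = G A"
    using refines unfolding refinement_def by blast
  then have "Fset F B (GB B) \<subseteq> Fset F A (G A)" unfolding Fset_def by auto
  also have "\<dots> \<subseteq> Q" using invariant \<open>A \<in> \<A>\<close> .
  finally show "Fset F B (GB B) \<subseteq> Q" .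
qed (use refines in \<open>simp_all add: refinement_def\<close>)

lemma refinement_if_invariant_cover:
  assumes disjoint: "\<forall>a\<in>V. \<forall>b\<in>V. a \<noteq> b \<longrightarrow> Qu F Q a \<inter> Qu F Q b = {}"
    and outside_empty: "\<forall>c. c \<notin> V \<longrightarrow> Qu F Q c = {}"
    and "a0 \<in> V" and cover: "invariant_cover F Q \<A> G"
  shows "refinement Q (AV F Q V) (GV F Q V) \<A> (G({} := GV F Q V (Qu F Q a0)))"
  unfolding refinement_def
proof (intro conjI ballI)
  fix A assume "A \<in> \<A>"
  show "\<exists>A'\<in>AV F Q V. A \<subseteq> A' \<and> (G({} := GV F Q V (Qu F Q a0))) A = GV F Q V A'"
  proof (cases "A = {}")
    case True
    have "Qu F Q a0 \<in> AV F Q V" using \<open>a0 \<in> V\<close> unfolding AV_def by (rule imageI)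
    with True show ?thesis by auto
  next
    case False
    have "A \<subseteq> Qu F Q (G A)" using cover \<open>A \<in> \<A>\<close> by (rule invariant_cover_subset_Qu)
    with False have "Qu F Q (G A) \<noteq> {}" by blast
    moreover from this have "G A \<in> V" using outside_empty by blast
    ultimately have "GV F Q V (Qu F Q (G A)) = G A" using disjoint by (simp add: GV_Qu_eq)
    moreover have "Qu F Q (G A) \<in> AV F Q V" using \<open>G A \<in> V\<close> unfolding AV_def by (rule imageI)
    ultimately show ?thesis using \<open>A \<subseteq> Qu F Q (G A)\<close> False by auto
  qed
qed (use cover in \<open>auto simp: invariant_cover_def\<close>)

theorem corollary3p12:
  fixes F :: "'x \<Rightarrow> 'u \<Rightarrow> 'x set" and Q :: "'x set" and V :: "'u set"
  assumes "is_system F"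
    and "controlled_invariant F Q"
    and "finite V" and "is_cover F Q V"
    and C1: "\<forall>a\<in>V. \<forall>b\<in>V. a \<noteq> b \<longrightarrow> Qu F Q a \<inter> Qu F Q b = {}"
    and C2: "\<forall>a\<in>V. \<forall>b\<in>V. adm_matrix F Q a b \<longrightarrow>
               (\<exists>K. K \<subseteq> Qu F Q a \<and> Qu F Q b \<subseteq> Fset F K a)"
    and C3: "\<forall>c. c \<notin> V \<longrightarrow> Qu F Q c = {}"
  shows "hfb_inv F Q =
     Inf {h_inv F Q \<B> GB | \<B> GB. refinement Q (AV F Q V) (GV F Q V) \<B> GB}"
proof -
  let ?I = "{h_inv F Q \<A> G | \<A> G. invariant_cover F Q \<A> G}"
  let ?R = "{h_inv F Q \<B> GB | \<B> GB. refinement Q (AV F Q V) (GV F Q V) \<B> GB}"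
  have "?I = ?R"
  proof (cases "V = {}")
    case True
    then have "Q = {}" using \<open>is_cover F Q V\<close> unfolding is_cover_def by simp
    then have "invariant_cover F Q {} G" "refinement Q (AV F Q V) (GV F Q V) {} G" for G
      unfolding invariant_cover_def refinement_def by simp_all
    then have "?I = {0}" "?R = {0}" using \<open>Q = {}\<close> by (auto simp: h_inv_empty)
    then show ?thesis by simp
  next
    case False
    then obtain a0 where "a0 \<in> V" by blast
    show ?thesis
    proof (intro set_eqI iffI)
      fix h assume "h \<in> ?I"
      then obtain \<A> G where h: "h = h_inv F Q \<A> G" and "invariant_cover F Q \<A> G" by blast
      let ?G' = "G({} := GV F Q V (Qu F Q a0))"
      have "refinement Q (AV F Q V) (GV F Q V) \<A> ?G'"
        by (rule refinement_if_invariant_cover) fact+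
      moreover have "h = h_inv F Q \<A> ?G'" unfolding h h_inv_fun_upd_empty ..
      ultimately show "h \<in> ?R" by blast
    next
      fix h assume "h \<in> ?R"
      then show "h \<in> ?I" using invariant_cover_if_refinement AV_GV_invariant by blast
    qed
  qed
  then show ?thesis unfolding hfb_inv_def by simp
qed

end
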